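(* If $(H,R)$ is a semiquasitriangular Hopf algebra, then for all $h\in H$ $$\nu(h)= R^{(2)}h_2R'^{(2)}\otimes S^{2}(R'^{(1)})S(h_1)S(R^{(1)})h_3 = R^{(1)}h_2S(R'^{(1)})\otimes S(h_1)R^{(2)}h_3R'^{(2)}.$$
   Context: All vector spaces are over a field $k$, $\otimes=\otimes_k$. For a Hopf algebra $H$ with comultiplication $\Delta$, counit $\epsilon$, antipode $S$, we use Sweedler notation $\Delta(h)=h_1\otimes h_2$, $(\Delta\otimes\mathrm{id})\Delta(h)=h_1\otimes h_2\otimes h_3$, etc. $\operatorname{Z}(H)$ is the centre of $H$. For $R\in H\otimes H$ we write $R=R^{(1)}\otimes R^{(2)}$ (summation understood); $R'^{(1)}\otimes R'^{(2)}$ denotes another copy of $R$. Definition (semiquasitriangular Hopf algebra): a pair $(H,R)$ with $H$ a Hopf algebra with bijective antipode and $R\in H\otimes H$ invertible such that (1) $R^{(1)}_1\otimes R^{(1)}_2\otimes R^{(2)} = R^{(1)}\otimes R'^{(1)}\otimes R^{(2)}R'^{(2)}$; (2) $R^{(1)}\otimes R^{(2)}_1\otimes R^{(2)}_2 = R^{(1)}R'^{(1)}\otimes R'^{(2)}\otimes R^{(2)}$; (3) $R^{(1)}\otimes R^{(2)}_2R'^{(1)}\otimes R^{(2)}_1R'^{(2)} = R^{(1)}\otimes R'^{(1)}R^{(2)}_1\otimes R'^{(2)}R^{(2)}_2$; (4) $R^{(1)}_2R'^{(1)}\otimes R^{(1)}_1R'^{(2)}\otimes R^{(2)} = R'^{(1)}R^{(1)}_1\otimes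 R'^{(2)}R^{(1)}_2\otimes R^{(2)}$; (5) $\nu(h):=R^{(2)}h_2R'^{(2)}\otimes S(h_1)S(R^{(1)})h_3R'^{(1)}\in H\otimes\operatorname{Z}(H)$ for all $h\in H$; (6) $\nu(h)=R^{(1)}h_2R'^{(1)}\otimes S(R'^{(2)})S(h_1)R^{(2)}h_3$ for all $h\in H$. The map $\nu:H\to H\otimes H$ in the claim is the one defined in (5). *)

theory Defs
  imports Complex_Main
begin

text \<open>An element of the n-fold tensor power of H is represented by a finite formal
sum of pure tensors x1 (x) ... (x) xn, i.e. by a list of lists (each inner list is a pure
tensor; scalars are absorbed into the factors, negatives via (-x1) (x) ...).
tens_eq scale s t means that s and t denote the same element of the tensor power
over the field: it is the smallest congruence on formal sums (commutative monoid
of lists under append) generated by additivity in each slot, vanishing of a pure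
tensor with a zero factor, and moving scalars between slots (k-balancedness).
This is the usual construction of the tensor product as a quotient of the free
abelian group on tuples.\<close>

inductive tens_eq :: "('k::field \<Rightarrow> 'h::ab_group_add \<Rightarrow> 'h) \<Rightarrow> 'h list list \<Rightarrow> 'h list list \<Rightarrow> bool"
  for scale :: "'k::field \<Rightarrow> 'h::ab_group_add \<Rightarrow> 'h" where
  te_refl: "tens_eq scale s s"
| te_sym: "tens_eq scale s t \<Longrightarrow> tens_eq scale t s"
| te_trans: "tens_eq scale s t \<Longrightarrow> tens_eq scale t u \<Longrightarrow> tens_eq scale s u"
| te_app: "tens_eq scale s s' \<Longrightarrow> tens_eq scale (s @ t) (s' @ t)"
| te_comm: "tens_eq scale (s @ t) (t @ s)"
| te_add: "tens_eq scale [xs @ [a + b] @ ys] [xs @ [a] @ ys, xs @ [b] @ ys]"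
| te_zero: "tens_eq scale [xs @ [0] @ ys] []"
| te_bal: "tens_eq scale [xs @ [scale c a] @ ys @ [b] @ zs] [xs @ [a] @ ys @ [scale c b] @ zs]"

definition t2 :: "('h \<times> 'h) list \<Rightarrow> 'h list list" where
  "t2 xs = map (\<lambda>(a, b). [a, b]) xs"

definition t3 :: "('h \<times> 'h \<times> 'h) list \<Rightarrow> 'h list list" where
  "t3 xs = map (\<lambda>(a, b, c). [a, b, c]) xs"

definition centre :: "'h::ring_1 set" where
  "centre = {z. \<forall>x. z * x = x * z}"

text \<open>A Hopf algebra over the field 'k: the ring 'h is a k-algebra via scale;
the comultiplication Delta h is a representative (formal sum of h1 (x) h2) of the
element of H (x) H; eps is the counit and S the antipode.\<close>

locale hopf_algebra = Vector_Spaces.vector_space scale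
  for scale :: "'k::field \<Rightarrow> 'h::ring_1 \<Rightarrow> 'h" +
  fixes Delta :: "'h \<Rightarrow> ('h \<times> 'h) list"
    and eps :: "'h \<Rightarrow> 'k"
    and S :: "'h \<Rightarrow> 'h"
  assumes scale_mult_left: "scale c (x * y) = scale c x * y"
    and scale_mult_right: "scale c (x * y) = x * scale c y"
    and Delta_add: "tens_eq scale (t2 (Delta (x + y))) (t2 (Delta x @ Delta y))"
    and Delta_scale: "tens_eq scale (t2 (Delta (scale c x))) (t2 [(scale c a, b). (a, b) \<leftarrow> Delta x])"
    and Delta_mult: "tens_eq scale (t2 (Delta (x * y)))
                        (t2 [(a * c, b * d). (a, b) \<leftarrow> Delta x, (c, d) \<leftarrow> Delta y])"
    and Delta_one: "tens_eq scale (t2 (Delta 1)) (t2 [(1, 1)])"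
    and coassoc: "tens_eq scale (t3 [(a1, a2, b). (a, b) \<leftarrow> Delta x, (a1, a2) \<leftarrow> Delta a])
                                (t3 [(a, b1, b2). (a, b) \<leftarrow> Delta x, (b1, b2) \<leftarrow> Delta b])"
    and eps_add: "eps (x + y) = eps x + eps y"
    and eps_scale: "eps (scale c x) = c * eps x"
    and eps_mult: "eps (x * y) = eps x * eps y"
    and eps_one: "eps 1 = 1"
    and counit_left: "(\<Sum>(a, b) \<leftarrow> Delta x. scale (eps a) b) = x"
    and counit_right: "(\<Sum>(a, b) \<leftarrow> Delta x. scale (eps b) a) = x"
    and S_add: "S (x + y) = S x + S y"
    and S_scale: "S (scale c x) = scale c (S x)"
    and antipode_left: "(\<Sum>(a, b) \<leftarrow> Delta x. S a * b) = scale (eps x) 1"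
    and antipode_right: "(\<Sum>(a, b) \<leftarrow> Delta x. a * S b) = scale (eps x) 1"
    and S_bij: "bij S"

text \<open>Iterated comultiplication h1 (x) h2 (x) h3 = (Delta (x) id) Delta h.\<close>
definition Delta2 :: "('h \<Rightarrow> ('h \<times> 'h) list) \<Rightarrow> 'h \<Rightarrow> ('h \<times> 'h \<times> 'h) list" where
  "Delta2 Delta x = [(a1, a2, b). (a, b) \<leftarrow> Delta x, (a1, a2) \<leftarrow> Delta a]"

definition nu :: "('h::ring_1 \<Rightarrow> ('h \<times> 'h) list) \<Rightarrow> ('h \<Rightarrow> 'h) \<Rightarrow> ('h \<times> 'h) list \<Rightarrow> 'h \<Rightarrow> ('h \<times> 'h) list" where
  "nu Delta S R x = [(r2 * h2 * s2, S h1 * S r1 * h3 * s1).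
      (r1, r2) \<leftarrow> R, (s1, s2) \<leftarrow> R, (h1, h2, h3) \<leftarrow> Delta2 Delta x]"

locale semiquasitriangular = hopf_algebra scale Delta eps S
  for scale :: "'k::field \<Rightarrow> 'h::ring_1 \<Rightarrow> 'h"
    and Delta :: "'h \<Rightarrow> ('h \<times> 'h) list"
    and eps :: "'h \<Rightarrow> 'k"
    and S :: "'h \<Rightarrow> 'h" +
  fixes R :: "('h \<times> 'h) list"
  assumes R_invertible: "\<exists>Q. tens_eq scale (t2 [(a * c, b * d). (a, b) \<leftarrow> R, (c, d) \<leftarrow> Q]) (t2 [(1, 1)])
                          \<and> tens_eq scale (t2 [(c * a, d * b). (a, b) \<leftarrow> R, (c, d) \<leftarrow> Q]) (t2 [(1, 1)])"
    and sq1: "tens_eq scale (t3 [(x1, x2, r2). (r1, r2) \<leftarrow> R, (x1, x2) \<leftarrow> Delta r1])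
                            (t3 [(r1, s1, r2 * s2). (r1, r2) \<leftarrow> R, (s1, s2) \<leftarrow> R])"
    and sq2: "tens_eq scale (t3 [(r1, y1, y2). (r1, r2) \<leftarrow> R, (y1, y2) \<leftarrow> Delta r2])
                            (t3 [(r1 * s1, s2, r2). (r1, r2) \<leftarrow> R, (s1, s2) \<leftarrow> R])"
    and sq3: "tens_eq scale (t3 [(r1, y2 * s1, y1 * s2). (r1, r2) \<leftarrow> R, (y1, y2) \<leftarrow> Delta r2, (s1, s2) \<leftarrow> R])
                            (t3 [(r1, s1 * y1, s2 * y2). (r1, r2) \<leftarrow> R, (y1, y2) \<leftarrow> Delta r2, (s1, s2) \<leftarrow> R])"
    and sq4: "tens_eq scale (t3 [(x2 * s1, x1 * s2, r2). (r1, r2) \<leftarrow> R, (x1, x2) \<leftarrow> Delta r1, (s1, s2) \<leftarrow> R])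
                            (t3 [(s1 * x1, s2 * x2, r2). (r1, r2) \<leftarrow> R, (x1, x2) \<leftarrow> Delta r1, (s1, s2) \<leftarrow> R])"
    and sq5: "\<exists>zs. (\<forall>(a, z) \<in> set zs. z \<in> centre) \<and> tens_eq scale (t2 (nu Delta S R x)) (t2 zs)"
    and sq6: "tens_eq scale (t2 (nu Delta S R x))
               (t2 [(r1 * h2 * s1, S s2 * S h1 * r2 * h3).
                     (r1, r2) \<leftarrow> R, (s1, s2) \<leftarrow> R, (h1, h2, h3) \<leftarrow> Delta2 Delta x])"

end

theory Submission
  imports Defs "HOL-Library.Multiset"
begin

(* Put P = (S \<otimes> id) R and P' = (id \<otimes> S\<inverse>) R.  Applying m (S \<otimes> id) \<otimes> id to (1) and
   id \<otimes> m (S\<inverse> \<otimes> id) \<tau> to (2), together with the counit, gives P R = P' R = 1 \<otimes> 1; since R has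
   a right inverse, also R P = R P' = 1 \<otimes> 1.  Into the right-hand side of the first identity we
   insert R P as a factor 1 \<otimes> 1, into that of the second (id \<otimes> S) (R P').  Regrouping gives a sum
   of terms p x \<otimes> y q z where \<Sum> p \<otimes> q is \<nu>(h), in the form (5) resp. (6), and \<Sum> x \<otimes> y z is
   again 1 \<otimes> 1, namely \<tau> (S \<otimes> id) (R P) resp. R P.  By (5) the factors q are central, so they
   can be moved to the front, and what remains is \<nu>(h) (1 \<otimes> 1) = \<nu>(h). *)

lemma sum_list_swap:
  "(\<Sum>a\<leftarrow>A. \<Sum>b\<leftarrow>B. f a b) = (\<Sum>b\<leftarrow>B. \<Sum>a\<leftarrow>A. f a b :: 'a::comm_monoid_add)"
  by (induction A) (simp_all add: sum_list_addf)

lemma sum_list_swap_prod: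
  "(\<Sum>(a, b)\<leftarrow>A. \<Sum>(c, d)\<leftarrow>B. f a b c d) = (\<Sum>(c, d)\<leftarrow>B. \<Sum>(a, b)\<leftarrow>A. f a b c d :: 'a::comm_monoid_add)"
  unfolding split_def by (rule sum_list_swap)

lemma sum_list_concat_map: "sum_list (map f (concat L)) = (\<Sum>l\<leftarrow>L. sum_list (map f l))"
  by (induction L) simp_all

lemma concat_concat: "concat (concat xss) = concat (map concat xss)"
  by (induction xss) simp_all

lemma t2_concat: "t2 (concat Xs) = concat (map t2 Xs)"
  by (induction Xs) (simp_all add: t2_def)

lemma t2_map: "t2 (map f X) = concat (map (\<lambda>x. t2 [f x]) X)"
  by (induction X) (simp_all add: t2_def)

declare tens_eq.te_refl [simp] tens_eq.te_trans [trans]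

locale k_algebra = Vector_Spaces.vector_space scale
  for scale :: "'k::field \<Rightarrow> 'h::ring_1 \<Rightarrow> 'h" +
  assumes scale_mult_left: "scale c (x * y) = scale c x * y"
    and scale_mult_right: "scale c (x * y) = x * scale c y"

sublocale hopf_algebra \<subseteq> k_algebra
  by unfold_locales (fact scale_mult_left scale_mult_right)+

context k_algebra
begin

abbreviation tensor_equiv :: "'h list list \<Rightarrow> 'h list list \<Rightarrow> bool" (infix "\<approx>" 50)
  where "s \<approx> t \<equiv> tens_eq scale s t"

abbreviation k_linear :: "('h \<Rightarrow> 'h) \<Rightarrow> bool"
  where "k_linear \<equiv> Vector_Spaces.linear scale scale"

lemma k_linear_iff:
  "k_linear f \<longleftrightarrow> (\<forall>x y. f (x + y) = f x + f y) \<and> (\<forall>c x. f (scale c x) = scale c (f x))"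
  using Vector_Spaces.linear_iff vector_space_axioms by blast

lemma k_linear_add: "k_linear f \<Longrightarrow> f (x + y) = f x + f y"
  and k_linear_scale: "k_linear f \<Longrightarrow> f (scale c x) = scale c (f x)"
  by (simp_all add: k_linear_iff)

lemma k_linear_zero: "k_linear f \<Longrightarrow> f 0 = 0"
  using k_linear_scale[of f 0 0] by simp

lemma k_linear_sum_list: "k_linear f \<Longrightarrow> f (\<Sum>y\<leftarrow>Y. g y) = (\<Sum>y\<leftarrow>Y. f (g y))"
  by (induction Y) (simp_all add: k_linear_add k_linear_zero)

lemma k_linear_sum_list_fun:
  "(\<And>y. y \<in> set Y \<Longrightarrow> k_linear (f y)) \<Longrightarrow> k_linear (\<lambda>x. \<Sum>y\<leftarrow>Y. f y x)"
  by (induction Y) (simp_all add: k_linear_iff scale_right_distrib ac_simps)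

lemma k_linear_mult_left: "k_linear f \<Longrightarrow> k_linear (\<lambda>x. a * f x)"
  and k_linear_mult_right: "k_linear f \<Longrightarrow> k_linear (\<lambda>x. f x * b)"
  by (simp_all add: k_linear_iff distrib_left distrib_right flip: scale_mult_left scale_mult_right)

lemmas k_linear_intros = linear_ident k_linear_mult_left k_linear_mult_right

section \<open>Tensors as formal sums of pure tensors\<close>

lemma tens_eq_append_left: "s \<approx> s' \<Longrightarrow> u @ s \<approx> u @ s'"
  by (meson tens_eq.te_app tens_eq.te_comm tens_eq.te_trans)

lemma tens_eq_append: "s \<approx> s' \<Longrightarrow> t \<approx> t' \<Longrightarrow> s @ t \<approx> s' @ t'"
  by (meson tens_eq.te_app tens_eq_append_left tens_eq.te_trans)

lemma tens_eq_mset: "mset s = mset t \<Longrightarrow> s \<approx> t"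
proof (induction s arbitrary: t)
  case (Cons x s)
  then obtain t1 t2 where t: "t = t1 @ x # t2"
    by (metis list.set_intros(1) set_mset_mset split_list)
  with Cons.prems have "s \<approx> t1 @ t2"
    by (intro Cons.IH) simp
  then have "[x] @ s \<approx> [x] @ t1 @ t2"
    by (rule tens_eq_append_left)
  also have "[x] @ t1 @ t2 \<approx> t1 @ [x] @ t2"
    using tens_eq.te_app[OF tens_eq.te_comm[of scale "[x]" t1]] by simp
  finally show ?case
    using t by simp
qed simp

lemma tens_eq_concat_map:
  "(\<And>a. a \<in> set A \<Longrightarrow> f a \<approx> g a) \<Longrightarrow> concat (map f A) \<approx> concat (map g A)"
  by (induction A) (auto intro: tens_eq_append)

lemma tens_eq_concat_map_append:
  "concat (map (\<lambda>y. f y @ g y) Y) \<approx> concat (map f Y) @ concat (map g Y)"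
  by (rule tens_eq_mset) (induction Y, auto)

lemma tens_eq_concat_map_swap:
  "concat (map (\<lambda>a. concat (map (f a) B)) A) \<approx> concat (map (\<lambda>b. concat (map (\<lambda>a. f a b) A)) B)"
  by (rule tens_eq_mset) (simp add: mset_concat comp_def sum_list_swap[of _ A])

lemma tens_eq_t2_concat_map:
  "(\<And>x. x \<in> set X \<Longrightarrow> t2 (f x) \<approx> t2 (g x)) \<Longrightarrow> t2 (concat (map f X)) \<approx> t2 (concat (map g X))"
  unfolding t2_concat map_map comp_def by (rule tens_eq_concat_map)

lemma tens_eq_t2_map:
  "(\<And>x. x \<in> set X \<Longrightarrow> t2 [f x] \<approx> t2 [g x]) \<Longrightarrow> t2 (map f X) \<approx> t2 (map g X)"
  unfolding t2_map by (rule tens_eq_concat_map)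

lemma tens_eq_t2_swap:
  "t2 (concat (map (\<lambda>a. map (f a) B) A)) \<approx> t2 (concat (map (\<lambda>b. map (\<lambda>a. f a b) A) B))"
  unfolding t2_concat map_map comp_def t2_map by (rule tens_eq_concat_map_swap)

lemma tens_eq_t2_swap_concat:
  "t2 (concat (map (\<lambda>a. concat (map (f a) B)) A)) \<approx> t2 (concat (map (\<lambda>b. concat (map (\<lambda>a. f a b) A)) B))"
  unfolding t2_concat map_map comp_def by (rule tens_eq_concat_map_swap)

lemma tens_eq_add_left: "[[a + b, y]] \<approx> [[a, y], [b, y]]"
  using tens_eq.te_add[of scale "[]" a b "[y]"] by simp

lemma tens_eq_add_right: "[[y, a + b]] \<approx> [[y, a], [y, b]]"
  using tens_eq.te_add[of scale "[y]" a b "[]"] by simp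

lemma tens_eq_zero_left: "[[0, y]] \<approx> []"
  using tens_eq.te_zero[of scale "[]" "[y]"] by simp

lemma tens_eq_zero_right: "[[y, 0]] \<approx> []"
  using tens_eq.te_zero[of scale "[y]" "[]"] by simp

lemma tens_eq_scale: "[[scale c a, b]] \<approx> [[a, scale c b]]"
  using tens_eq.te_bal[of scale "[]" c a "[]" b "[]"] by simp

lemma tens_eq_scale_t2: "t2 [(scale c a, b)] \<approx> t2 [(a, scale c b)]"
  by (simp add: t2_def tens_eq_scale)

lemma tens_eq_sum_list_left: "t2 (map (\<lambda>y. (f y, b)) Y) \<approx> t2 [(\<Sum>y\<leftarrow>Y. f y, b)]"
proof (induction Y)
  case Nil
  show ?case
    using tens_eq.te_sym[OF tens_eq_zero_left] by (simp add: t2_def)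
next
  case (Cons y Y)
  then have "[[f y, b]] @ t2 (map (\<lambda>y. (f y, b)) Y) \<approx> [[f y, b]] @ t2 [(\<Sum>y\<leftarrow>Y. f y, b)]"
    by (rule tens_eq_append_left)
  also have "\<dots> \<approx> t2 [(\<Sum>y\<leftarrow>y # Y. f y, b)]"
    using tens_eq.te_sym[OF tens_eq_add_left] by (simp add: t2_def)
  finally show ?case
    by (simp add: t2_def)
qed

lemma tens_eq_sum_list_right: "t2 (map (\<lambda>y. (a, g y)) Y) \<approx> t2 [(a, \<Sum>y\<leftarrow>Y. g y)]"
proof (induction Y)
  case Nil
  show ?case
    using tens_eq.te_sym[OF tens_eq_zero_right] by (simp add: t2_def)
next
  case (Cons y Y)
  then have "[[a, g y]] @ t2 (map (\<lambda>y. (a, g y)) Y) \<approx> [[a, g y]] @ t2 [(a, \<Sum>y\<leftarrow>Y. g y)]"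
    by (rule tens_eq_append_left)
  also have "\<dots> \<approx> t2 [(a, \<Sum>y\<leftarrow>y # Y. g y)]"
    using tens_eq.te_sym[OF tens_eq_add_right] by (simp add: t2_def)
  finally show ?case
    by (simp add: t2_def)
qed

section \<open>Multilinear maps on tensors\<close>

definition balanced :: "('h list \<Rightarrow> 'h list list) \<Rightarrow> bool" where
  "balanced F \<longleftrightarrow>
     (\<forall>xs a b ys. F (xs @ [a + b] @ ys) \<approx> F (xs @ [a] @ ys) @ F (xs @ [b] @ ys)) \<and>
     (\<forall>xs ys. F (xs @ [0] @ ys) \<approx> []) \<and>
     (\<forall>xs c a ys b zs. F (xs @ [scale c a] @ ys @ [b] @ zs) \<approx> F (xs @ [a] @ ys @ [scale c b] @ zs))"

lemma tens_eq_concat_map_balanced: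
  assumes "balanced F" and "s \<approx> t"
  shows "concat (map F s) \<approx> concat (map F t)"
  using assms(2) by induction (use assms(1) in \<open>auto simp: balanced_def intro: tens_eq.intros\<close>)

definition multilinear :: "('h list \<Rightarrow> 'h) \<Rightarrow> bool" where
  "multilinear f \<longleftrightarrow> (\<forall>xs ys. k_linear (\<lambda>a. f (xs @ [a] @ ys)))"

lemma sum_list_map_multilinear:
  assumes "multilinear f" and "s \<approx> t"
  shows "sum_list (map f s) = sum_list (map f t)"
  using assms(2)
proof induction
  case (te_bal xs c a ys b zs)
  have "f (xs @ [scale c a] @ (ys @ [b] @ zs)) = scale c (f (xs @ [a] @ (ys @ [b] @ zs)))"
    and "f ((xs @ [a] @ ys) @ [scale c b] @ zs) = scale c (f ((xs @ [a] @ ys) @ [b] @ zs))"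
    using assms(1) by (simp_all only: multilinear_def k_linear_iff)
  then show ?case
    by simp
next
  case (te_zero xs ys)
  show ?case
    using assms(1) k_linear_zero[of "\<lambda>a. f (xs @ [a] @ ys)"] by (simp add: multilinear_def)
qed (use assms(1) in \<open>auto simp: multilinear_def k_linear_iff add.commute\<close>)

definition bilinear_map :: "('h \<Rightarrow> 'h \<Rightarrow> 'h) \<Rightarrow> bool" where
  "bilinear_map f \<longleftrightarrow> (\<forall>b. k_linear (\<lambda>a. f a b)) \<and> (\<forall>a. k_linear (f a))"

definition trilinear_map :: "('h \<Rightarrow> 'h \<Rightarrow> 'h \<Rightarrow> 'h) \<Rightarrow> bool" where
  "trilinear_map f \<longleftrightarrow>
     (\<forall>b c. k_linear (\<lambda>a. f a b c)) \<and> (\<forall>a c. k_linear (\<lambda>b. f a b c)) \<and> (\<forall>a b. k_linear (f a b))"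

lemma bilinear_mapD:
  assumes "bilinear_map f"
  shows "f (a + a') b = f a b + f a' b" "f a (b + b') = f a b + f a b'"
    "f (scale c a) b = scale c (f a b)" "f a (scale c b) = scale c (f a b)"
    "f 0 b = 0" "f a 0 = 0"
  using assms k_linear_zero[of "\<lambda>a. f a b"] k_linear_zero[of "f a"]
  by (simp_all add: bilinear_map_def k_linear_iff)

lemma multilinear_bilinear_map:
  "bilinear_map f \<Longrightarrow> multilinear (\<lambda>l. case l of [a, b] \<Rightarrow> f a b | _ \<Rightarrow> 0)"
  unfolding multilinear_def bilinear_map_def k_linear_iff
  by (auto simp: Cons_eq_append_conv append_eq_Cons_conv split: list.split)

lemma multilinear_trilinear_map:
  "trilinear_map f \<Longrightarrow> multilinear (\<lambda>l. case l of [a, b, c] \<Rightarrow> f a b c | _ \<Rightarrow> 0)"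
  unfolding multilinear_def trilinear_map_def k_linear_iff
  by (auto simp: Cons_eq_append_conv append_eq_Cons_conv split: list.split)

lemma bilinear_map_tens_eq:
  assumes "bilinear_map f" and "t2 X \<approx> t2 Y"
  shows "(\<Sum>(a, b)\<leftarrow>X. f a b) = (\<Sum>(a, b)\<leftarrow>Y. f a b)"
proof -
  have "(\<Sum>(a, b)\<leftarrow>Z. f a b) = sum_list (map (\<lambda>l. case l of [a, b] \<Rightarrow> f a b | _ \<Rightarrow> 0) (t2 Z))" for Z
    by (induction Z) (auto simp: t2_def)
  then show ?thesis
    using sum_list_map_multilinear[OF multilinear_bilinear_map] assms by metis
qed

lemma trilinear_map_tens_eq:
  assumes "trilinear_map f" and "t3 X \<approx> t3 Y"
  shows "(\<Sum>(a, b, c)\<leftarrow>X. f a b c) = (\<Sum>(a, b, c)\<leftarrow>Y. f a b c)"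
proof -
  have "(\<Sum>(a, b, c)\<leftarrow>Z. f a b c) = sum_list (map (\<lambda>l. case l of [a, b, c] \<Rightarrow> f a b c | _ \<Rightarrow> 0) (t3 Z))" for Z
    by (induction Z) (auto simp: t3_def)
  then show ?thesis
    using sum_list_map_multilinear[OF multilinear_trilinear_map] assms by metis
qed

lemma tens_eq_contract_left:
  assumes "bilinear_map f" and "t3 X \<approx> t3 Y"
  shows "t2 (map (\<lambda>(a, b, c). (f a b, c)) X) \<approx> t2 (map (\<lambda>(a, b, c). (f a b, c)) Y)"
proof -
  let ?F = "\<lambda>l. case l of [a, b, c] \<Rightarrow> [[f a b, c]] | _ \<Rightarrow> []"
  have "balanced ?F"
    using assms(1) unfolding balanced_def
    by (auto simp: Cons_eq_append_conv append_eq_Cons_conv bilinear_mapD tens_eq_add_left tens_eq_add_right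
        tens_eq_zero_left tens_eq_zero_right tens_eq_scale split: list.split)
  moreover have "t2 (map (\<lambda>(a, b, c). (f a b, c)) Z) = concat (map ?F (t3 Z))" for Z
    by (induction Z) (auto simp: t2_def t3_def)
  ultimately show ?thesis
    using tens_eq_concat_map_balanced assms(2) by metis
qed

lemma tens_eq_contract_right:
  assumes "bilinear_map f" and "t3 X \<approx> t3 Y"
  shows "t2 (map (\<lambda>(a, b, c). (a, f b c)) X) \<approx> t2 (map (\<lambda>(a, b, c). (a, f b c)) Y)"
proof -
  let ?F = "\<lambda>l. case l of [a, b, c] \<Rightarrow> [[a, f b c]] | _ \<Rightarrow> []"
  have "balanced ?F"
    using assms(1) unfolding balanced_def
    by (auto simp: Cons_eq_append_conv append_eq_Cons_conv bilinear_mapD tens_eq_add_left tens_eq_add_right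
        tens_eq_zero_left tens_eq_zero_right tens_eq_scale split: list.split)
  moreover have "t2 (map (\<lambda>(a, b, c). (a, f b c)) Z) = concat (map ?F (t3 Z))" for Z
    by (induction Z) (auto simp: t2_def t3_def)
  ultimately show ?thesis
    using tens_eq_concat_map_balanced assms(2) by metis
qed

definition tensor_bilinear :: "('h \<Rightarrow> 'h \<Rightarrow> 'h list list) \<Rightarrow> bool" where
  "tensor_bilinear W \<longleftrightarrow>
     (\<forall>p p' q. W (p + p') q \<approx> W p q @ W p' q) \<and> (\<forall>p q q'. W p (q + q') \<approx> W p q @ W p q') \<and>
     (\<forall>q. W 0 q \<approx> []) \<and> (\<forall>p. W p 0 \<approx> []) \<and> (\<forall>c p q. W (scale c p) q \<approx> W p (scale c q))"

lemma tensor_bilinear_tens_eq: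
  assumes "tensor_bilinear W" and "t2 X \<approx> t2 Y"
  shows "concat (map (\<lambda>(a, b). W a b) X) \<approx> concat (map (\<lambda>(a, b). W a b) Y)"
proof -
  let ?F = "\<lambda>l. case l of [a, b] \<Rightarrow> W a b | _ \<Rightarrow> []"
  have "balanced ?F"
    using assms(1) unfolding balanced_def tensor_bilinear_def
    by (auto simp: Cons_eq_append_conv append_eq_Cons_conv split: list.split)
  moreover have "concat (map (\<lambda>(a, b). W a b) Z) = concat (map ?F (t2 Z))" for Z
    by (induction Z) (auto simp: t2_def)
  ultimately show ?thesis
    using tens_eq_concat_map_balanced assms(2) by metis
qed

lemma tensor_bilinear_unit:
  assumes "tensor_bilinear W" and "t2 E \<approx> t2 [(1, 1)]"
  shows "W 1 1 \<approx> concat (map (\<lambda>(p, q). W p q) E)"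
  using tensor_bilinear_tens_eq[OF assms(1) tens_eq.te_sym[OF assms(2)]] by simp

lemma tensor_bilinear_pure:
  assumes "k_linear f" and "k_linear g"
  shows "tensor_bilinear (\<lambda>p q. [[f p, g q]])"
  using assms k_linear_zero[OF assms(1)] k_linear_zero[OF assms(2)]
  by (simp add: tensor_bilinear_def k_linear_iff tens_eq_add_left tens_eq_add_right
      tens_eq_zero_left tens_eq_zero_right tens_eq_scale)

lemma tensor_bilinear_pure_swap:
  assumes "k_linear f" and "k_linear g"
  shows "tensor_bilinear (\<lambda>p q. [[g q, f p]])"
  using assms k_linear_zero[OF assms(1)] k_linear_zero[OF assms(2)]
  by (simp add: tensor_bilinear_def k_linear_iff tens_eq_add_left tens_eq_add_right
      tens_eq_zero_left tens_eq_zero_right tens_eq.te_sym[OF tens_eq_scale])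

lemma tensor_bilinear_concat_map:
  assumes "\<And>y. y \<in> set Y \<Longrightarrow> tensor_bilinear (W y)"
  shows "tensor_bilinear (\<lambda>p q. concat (map (\<lambda>y. W y p q) Y))"
  unfolding tensor_bilinear_def
proof (intro conjI allI)
  fix p p' q
  have "concat (map (\<lambda>y. W y (p + p') q) Y) \<approx> concat (map (\<lambda>y. W y p q @ W y p' q) Y)"
    using assms by (intro tens_eq_concat_map) (simp add: tensor_bilinear_def)
  also have "\<dots> \<approx> concat (map (\<lambda>y. W y p q) Y) @ concat (map (\<lambda>y. W y p' q) Y)"
    by (rule tens_eq_concat_map_append)
  finally show "concat (map (\<lambda>y. W y (p + p') q) Y) \<approx> \<dots>" .
next
  fix p q q'
  have "concat (map (\<lambda>y. W y p (q + q')) Y) \<approx> concat (map (\<lambda>y. W y p q @ W y p q') Y)"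
    using assms by (intro tens_eq_concat_map) (simp add: tensor_bilinear_def)
  also have "\<dots> \<approx> concat (map (\<lambda>y. W y p q) Y) @ concat (map (\<lambda>y. W y p q') Y)"
    by (rule tens_eq_concat_map_append)
  finally show "concat (map (\<lambda>y. W y p (q + q')) Y) \<approx> \<dots>" .
next
  fix q
  show "concat (map (\<lambda>y. W y 0 q) Y) \<approx> []"
    using tens_eq_concat_map[of Y "\<lambda>y. W y 0 q" "\<lambda>_. []"] assms by (simp add: tensor_bilinear_def map_replicate_const)
next
  fix p
  show "concat (map (\<lambda>y. W y p 0) Y) \<approx> []"
    using tens_eq_concat_map[of Y "\<lambda>y. W y p 0" "\<lambda>_. []"] assms by (simp add: tensor_bilinear_def map_replicate_const)
next
  fix c p q
  show "concat (map (\<lambda>y. W y (scale c p) q) Y) \<approx> concat (map (\<lambda>y. W y p (scale c q)) Y)"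
    using assms by (intro tens_eq_concat_map) (simp add: tensor_bilinear_def)
qed

lemma tens_eq_map_tensor:
  assumes "k_linear f" and "k_linear g" and "t2 X \<approx> t2 Y"
  shows "t2 (map (\<lambda>(a, b). (f a, g b)) X) \<approx> t2 (map (\<lambda>(a, b). (f a, g b)) Y)"
  using tensor_bilinear_tens_eq[OF tensor_bilinear_pure[OF assms(1,2)] assms(3)]
  by (simp add: t2_def split_def comp_def)

lemma tens_eq_map_tensor_swap:
  assumes "k_linear f" and "k_linear g" and "t2 X \<approx> t2 Y"
  shows "t2 (map (\<lambda>(a, b). (g b, f a)) X) \<approx> t2 (map (\<lambda>(a, b). (g b, f a)) Y)"
  using tensor_bilinear_tens_eq[OF tensor_bilinear_pure_swap[OF assms(1,2)] assms(3)]
  by (simp add: t2_def split_def comp_def)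

end

definition tensor_mult :: "('h::times \<times> 'h) list \<Rightarrow> ('h \<times> 'h) list \<Rightarrow> ('h \<times> 'h) list" where
  "tensor_mult X Y = [(a * c, b * d). (a, b) \<leftarrow> X, (c, d) \<leftarrow> Y]"

lemma tensor_mult_assoc:
  "tensor_mult (tensor_mult X Y) Z = tensor_mult X (tensor_mult Y (Z :: ('h::semigroup_mult \<times> 'h) list))"
  by (induction X) (auto simp: tensor_mult_def map_concat comp_def split_def mult.assoc)

lemma tensor_mult_one_left [simp]: "tensor_mult [(1, 1)] X = (X :: ('h::monoid_mult \<times> 'h) list)"
  and tensor_mult_one_right [simp]: "tensor_mult X [(1, 1)] = X"
  by (induction X) (auto simp: tensor_mult_def)

context k_algebra
begin

lemma tens_eq_tensor_mult_left:
  assumes "t2 X \<approx> t2 X'"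
  shows "t2 (tensor_mult X Y) \<approx> t2 (tensor_mult X' Y)"
proof -
  have "tensor_bilinear (\<lambda>p q. concat (map (\<lambda>(c, d). [[p * c, q * d]]) Y))"
    by (intro tensor_bilinear_concat_map) (auto intro!: tensor_bilinear_pure k_linear_intros)
  from tensor_bilinear_tens_eq[OF this assms] show ?thesis
    by (simp add: tensor_mult_def t2_def map_concat split_def comp_def)
qed

lemma tens_eq_tensor_mult_right:
  assumes "t2 Y \<approx> t2 Y'"
  shows "t2 (tensor_mult X Y) \<approx> t2 (tensor_mult X Y')"
proof -
  have "tensor_bilinear (\<lambda>p q. [[a * p, b * q]])" for a b
    by (intro tensor_bilinear_pure k_linear_intros)
  then have "concat (map (\<lambda>(p, q). [[a * p, b * q]]) Y) \<approx> concat (map (\<lambda>(p, q). [[a * p, b * q]]) Y')" for a b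
    using assms by (rule tensor_bilinear_tens_eq)
  then show ?thesis
    unfolding tensor_mult_def t2_def map_concat
    by (auto intro: tens_eq_concat_map simp: split_def comp_def)
qed

end

section \<open>Hopf algebras\<close>

context hopf_algebra
begin

lemma k_linear_S: "k_linear S"
  by (simp add: k_linear_iff S_add S_scale)

lemma k_linear_S_comp: "k_linear f \<Longrightarrow> k_linear (\<lambda>x. S (f x))"
  by (simp add: k_linear_iff S_add S_scale)

lemma bilinear_map_S_mult: "bilinear_map (\<lambda>a b. S a * b)"
  by (simp add: bilinear_map_def k_linear_intros k_linear_S_comp)

lemma bilinear_map_eps_left: "bilinear_map (\<lambda>a b. scale (eps a) b)"
  and bilinear_map_eps_right: "bilinear_map (\<lambda>a b. scale (eps b) a)"
  by (simp_all add: bilinear_map_def k_linear_iff eps_add eps_scale scale_left_distrib scale_right_distrib)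

lemma S_one: "S 1 = 1"
  using bilinear_map_tens_eq[OF bilinear_map_S_mult Delta_one] antipode_left[of 1] by (simp add: eps_one)

lemma sum_Delta_antipode_right: "(\<Sum>(a, b)\<leftarrow>Delta x. u * a * S b * v) = scale (eps x) (u * v)"
proof -
  have "(\<Sum>(a, b)\<leftarrow>Delta x. u * a * S b * v) = u * (\<Sum>(a, b)\<leftarrow>Delta x. a * S b) * v"
    by (simp add: split_def mult.assoc flip: sum_list_const_mult sum_list_mult_const)
  then show ?thesis
    by (simp add: antipode_right flip: scale_mult_left scale_mult_right)
qed

lemma sum_Delta_counit_left:
  assumes "k_linear g"
  shows "(\<Sum>(a, b)\<leftarrow>Delta x. scale (eps a) (g b)) = g x"
proof -
  have "g x = g (\<Sum>(a, b)\<leftarrow>Delta x. scale (eps a) b)"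
    by (simp add: counit_left)
  then show ?thesis
    using assms by (simp add: split_def k_linear_sum_list k_linear_scale)
qed

lemma sum_Delta_counit_right:
  assumes "k_linear g"
  shows "(\<Sum>(a, b)\<leftarrow>Delta x. scale (eps b) (g a)) = g x"
proof -
  have "g x = g (\<Sum>(a, b)\<leftarrow>Delta x. scale (eps b) a)"
    by (simp add: counit_right)
  then show ?thesis
    using assms by (simp add: split_def k_linear_sum_list k_linear_scale)
qed

definition Delta2' :: "'h \<Rightarrow> ('h \<times> 'h \<times> 'h) list" where
  "Delta2' x = [(a, b1, b2). (a, b) \<leftarrow> Delta x, (b1, b2) \<leftarrow> Delta b]"

lemma sum_Delta2_coassoc:
  "trilinear_map f \<Longrightarrow> (\<Sum>(a, b, c)\<leftarrow>Delta2 Delta x. f a b c) = (\<Sum>(a, b, c)\<leftarrow>Delta2' x. f a b c)"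
  using trilinear_map_tens_eq coassoc unfolding Delta2_def Delta2'_def by blast

lemma sum_Delta2'_S_mult:
  "(\<Sum>(x1, x2, x3)\<leftarrow>Delta2' x. \<Sum>(y1, y2, y3)\<leftarrow>Delta2' y. S (x1 * y1) * x2 * y2 * S y3 * S x3) = S (x * y)"
proof -
  have "(\<Sum>(x1, x2, x3)\<leftarrow>Delta2' x. \<Sum>(y1, y2, y3)\<leftarrow>Delta2' y. S (x1 * y1) * x2 * y2 * S y3 * S x3)
      = (\<Sum>(x1, c)\<leftarrow>Delta x. \<Sum>(x2, x3)\<leftarrow>Delta c. \<Sum>(y1, d)\<leftarrow>Delta y. \<Sum>(y2, y3)\<leftarrow>Delta d.
           S (x1 * y1) * x2 * y2 * S y3 * S x3)"
    by (simp add: Delta2'_def split_def comp_def sum_list_concat_map)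
  also have "\<dots> = (\<Sum>(x1, c)\<leftarrow>Delta x. \<Sum>(x2, x3)\<leftarrow>Delta c. \<Sum>(y1, d)\<leftarrow>Delta y.
           scale (eps d) (S (x1 * y1) * x2 * S x3))"
    by (simp only: sum_Delta_antipode_right)
  also have "\<dots> = (\<Sum>(x1, c)\<leftarrow>Delta x. \<Sum>(x2, x3)\<leftarrow>Delta c. S (x1 * y) * x2 * S x3)"
    by (simp add: sum_Delta_counit_right k_linear_intros k_linear_S_comp)
  also have "\<dots> = (\<Sum>(x1, c)\<leftarrow>Delta x. scale (eps c) (S (x1 * y)))"
    using sum_Delta_antipode_right[where v = 1] by simp
  also have "\<dots> = S (x * y)"
    by (simp add: sum_Delta_counit_right k_linear_intros k_linear_S_comp)
  finally show ?thesis .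
qed

lemma sum_Delta_mult_antipode_left:
  "(\<Sum>(x1, x2)\<leftarrow>Delta a. \<Sum>(y1, y2)\<leftarrow>Delta b. S (x1 * y1) * (x2 * y2)) = scale (eps a * eps b) 1"
proof -
  have "(\<Sum>(x1, x2)\<leftarrow>Delta a. \<Sum>(y1, y2)\<leftarrow>Delta b. S (x1 * y1) * (x2 * y2))
      = (\<Sum>(c, d)\<leftarrow>tensor_mult (Delta a) (Delta b). S c * d)"
    by (simp add: tensor_mult_def split_def comp_def sum_list_concat_map)
  also have "\<dots> = (\<Sum>(c, d)\<leftarrow>Delta (a * b). S c * d)"
    using bilinear_map_tens_eq[OF bilinear_map_S_mult Delta_mult[of a b]] by (simp add: tensor_mult_def)
  also have "\<dots> = scale (eps a * eps b) 1"
    by (simp add: antipode_left eps_mult)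
  finally show ?thesis .
qed

lemma sum_Delta2_S_mult:
  "(\<Sum>(x1, x2, x3)\<leftarrow>Delta2 Delta x. \<Sum>(y1, y2, y3)\<leftarrow>Delta2 Delta y. S (x1 * y1) * x2 * y2 * S y3 * S x3)
     = S y * S x"
proof -
  have "(\<Sum>(x1, x2, x3)\<leftarrow>Delta2 Delta x. \<Sum>(y1, y2, y3)\<leftarrow>Delta2 Delta y. S (x1 * y1) * x2 * y2 * S y3 * S x3)
      = (\<Sum>(a, x3)\<leftarrow>Delta x. \<Sum>(x1, x2)\<leftarrow>Delta a. \<Sum>(b, y3)\<leftarrow>Delta y. \<Sum>(y1, y2)\<leftarrow>Delta b.
           S (x1 * y1) * x2 * y2 * S y3 * S x3)"
    by (simp add: Delta2_def split_def comp_def sum_list_concat_map)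
  also have "\<dots> = (\<Sum>(a, x3)\<leftarrow>Delta x. \<Sum>(b, y3)\<leftarrow>Delta y.
           \<Sum>(x1, x2)\<leftarrow>Delta a. \<Sum>(y1, y2)\<leftarrow>Delta b. S (x1 * y1) * x2 * y2 * S y3 * S x3)"
    by (subst sum_list_swap_prod) (rule refl)
  also have "\<dots> = (\<Sum>(a, x3)\<leftarrow>Delta x. \<Sum>(b, y3)\<leftarrow>Delta y.
           (\<Sum>(x1, x2)\<leftarrow>Delta a. \<Sum>(y1, y2)\<leftarrow>Delta b. S (x1 * y1) * (x2 * y2)) * (S y3 * S x3))"
    by (simp add: split_def mult.assoc flip: sum_list_mult_const)
  also have "\<dots> = (\<Sum>(a, x3)\<leftarrow>Delta x. \<Sum>(b, y3)\<leftarrow>Delta y. scale (eps b) (S y3 * scale (eps a) (S x3)))"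
    by (simp add: sum_Delta_mult_antipode_left scale_scale mult.commute flip: scale_mult_left scale_mult_right)
  also have "\<dots> = (\<Sum>(a, x3)\<leftarrow>Delta x. scale (eps a) (S y * S x3))"
  proof -
    have "(\<Sum>(b, y3)\<leftarrow>Delta y. scale (eps b) (S y3 * scale (eps a) (S x3))) = S y * scale (eps a) (S x3)"
      for a x3
      by (rule sum_Delta_counit_left) (intro k_linear_intros k_linear_S_comp)
    then show ?thesis
      by (simp add: scale_mult_right)
  qed
  also have "\<dots> = S y * S x"
    by (simp add: sum_Delta_counit_left k_linear_intros k_linear_S_comp)
  finally show ?thesis .
qed

lemma S_mult: "S (x * y) = S y * S x"
proof -
  define T where "T X Y = (\<Sum>(x1, x2, x3)\<leftarrow>X. \<Sum>(y1, y2, y3)\<leftarrow>Y. S (x1 * y1) * x2 * y2 * S y3 * S x3)"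
    for X Y
  have coassoc_x: "T (Delta2 Delta x) Y = T (Delta2' x) Y" for Y
    unfolding T_def
    by (rule sum_Delta2_coassoc)
      (auto simp: trilinear_map_def split_def intro!: k_linear_sum_list_fun k_linear_intros k_linear_S_comp)
  have coassoc_y: "T X (Delta2 Delta y) = T X (Delta2' y)" for X
  proof -
    have "(\<Sum>(y1, y2, y3)\<leftarrow>Delta2 Delta y. S (x1 * y1) * x2 * y2 * S y3 * S x3)
        = (\<Sum>(y1, y2, y3)\<leftarrow>Delta2' y. S (x1 * y1) * x2 * y2 * S y3 * S x3)" for x1 x2 x3
      by (rule sum_Delta2_coassoc) (auto simp: trilinear_map_def intro!: k_linear_intros k_linear_S_comp)
    then show ?thesis
      unfolding T_def by simp
  qed
  have "S y * S x = T (Delta2 Delta x) (Delta2 Delta y)"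
    unfolding T_def by (rule sum_Delta2_S_mult[symmetric])
  also have "\<dots> = T (Delta2' x) (Delta2' y)"
    by (simp only: coassoc_x coassoc_y)
  also have "\<dots> = S (x * y)"
    unfolding T_def by (rule sum_Delta2'_S_mult)
  finally show ?thesis ..
qed

abbreviation Sinv :: "'h \<Rightarrow> 'h"
  where "Sinv \<equiv> inv S"

lemma S_Sinv [simp]: "S (Sinv x) = x"
  using S_bij by (simp add: bij_is_surj surj_f_inv_f)

lemma Sinv_S [simp]: "Sinv (S x) = x"
  using S_bij by (simp add: bij_is_inj)

lemma S_inject: "S x = S y \<longleftrightarrow> x = y"
  by (metis Sinv_S)

lemma k_linear_Sinv: "k_linear Sinv"
  unfolding k_linear_iff by (metis S_add S_scale S_Sinv Sinv_S)

lemma sum_Delta_antipode_left_Sinv: "(\<Sum>(a, b)\<leftarrow>Delta x. Sinv b * a) = scale (eps x) 1"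
proof -
  have "S (\<Sum>(a, b)\<leftarrow>Delta x. Sinv b * a) = (\<Sum>(a, b)\<leftarrow>Delta x. S a * b)"
    by (simp add: k_linear_sum_list[OF k_linear_S] split_def S_mult)
  also have "\<dots> = S (scale (eps x) 1)"
    by (simp add: antipode_left S_scale S_one)
  finally show ?thesis
    by (simp only: S_inject)
qed

end

section \<open>Semiquasitriangular Hopf algebras\<close>

context semiquasitriangular
begin

lemma R_right_cancel:
  assumes "t2 (tensor_mult A R) \<approx> t2 (tensor_mult B R)"
  shows "t2 A \<approx> t2 B"
proof -
  obtain Q where Q: "t2 (tensor_mult R Q) \<approx> t2 [(1, 1)]"
    using R_invertible unfolding tensor_mult_def by blast
  have "t2 A \<approx> t2 (tensor_mult A (tensor_mult R Q))"
    using tens_eq.te_sym[OF tens_eq_tensor_mult_right[OF Q, of A]] by simp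
  also have "\<dots> = t2 (tensor_mult (tensor_mult A R) Q)"
    by (simp add: tensor_mult_assoc)
  also have "\<dots> \<approx> t2 (tensor_mult (tensor_mult B R) Q)"
    by (rule tens_eq_tensor_mult_left[OF assms])
  also have "\<dots> = t2 (tensor_mult B (tensor_mult R Q))"
    by (simp add: tensor_mult_assoc)
  also have "\<dots> \<approx> t2 B"
    using tens_eq_tensor_mult_right[OF Q, of B] by simp
  finally show ?thesis .
qed

lemma R_right_inverse:
  assumes "t2 (tensor_mult X R) \<approx> t2 [(1, 1)]"
  shows "t2 (tensor_mult R X) \<approx> t2 [(1, 1)]"
proof (rule R_right_cancel)
  have "t2 (tensor_mult (tensor_mult R X) R) = t2 (tensor_mult R (tensor_mult X R))"
    by (simp add: tensor_mult_assoc)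
  also have "\<dots> \<approx> t2 (tensor_mult R [(1, 1)])"
    by (rule tens_eq_tensor_mult_right[OF assms])
  finally show "t2 (tensor_mult (tensor_mult R X) R) \<approx> t2 (tensor_mult [(1, 1)] R)"
    by simp
qed

lemma sq1_contract:
  assumes "bilinear_map f"
  shows "t2 [(\<Sum>(x1, x2)\<leftarrow>Delta r1. f x1 x2, r2). (r1, r2) \<leftarrow> R]
           \<approx> t2 [(f r1 s1, r2 * s2). (r1, r2) \<leftarrow> R, (s1, s2) \<leftarrow> R]"
proof -
  have "t2 [(\<Sum>(x1, x2)\<leftarrow>Delta r1. f x1 x2, r2). (r1, r2) \<leftarrow> R]
      \<approx> t2 [(f x1 x2, r2). (r1, r2) \<leftarrow> R, (x1, x2) \<leftarrow> Delta r1]"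
    unfolding t2_concat t2_map[of _ R] map_map
    by (rule tens_eq_concat_map) (auto simp: split_def intro: tens_eq.te_sym tens_eq_sum_list_left)
  also have "\<dots> \<approx> t2 [(f r1 s1, r2 * s2). (r1, r2) \<leftarrow> R, (s1, s2) \<leftarrow> R]"
    using tens_eq_contract_left[OF assms sq1] by (simp add: map_concat split_def comp_def)
  finally show ?thesis .
qed

lemma sq2_contract:
  assumes "bilinear_map f"
  shows "t2 [(r1, \<Sum>(y1, y2)\<leftarrow>Delta r2. f y1 y2). (r1, r2) \<leftarrow> R]
           \<approx> t2 [(r1 * s1, f s2 r2). (r1, r2) \<leftarrow> R, (s1, s2) \<leftarrow> R]"
proof -
  have "t2 [(r1, \<Sum>(y1, y2)\<leftarrow>Delta r2. f y1 y2). (r1, r2) \<leftarrow> R]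
      \<approx> t2 [(r1, f y1 y2). (r1, r2) \<leftarrow> R, (y1, y2) \<leftarrow> Delta r2]"
    unfolding t2_concat t2_map[of _ R] map_map
    by (rule tens_eq_concat_map) (auto simp: split_def intro: tens_eq.te_sym tens_eq_sum_list_right)
  also have "\<dots> \<approx> t2 [(r1 * s1, f s2 r2). (r1, r2) \<leftarrow> R, (s1, s2) \<leftarrow> R]"
    using tens_eq_contract_right[OF assms sq2] by (simp add: map_concat split_def comp_def)
  finally show ?thesis .
qed

lemma R_counit_left: "t2 [(1, \<Sum>(a, b)\<leftarrow>R. scale (eps a) b)] \<approx> t2 [(1, 1)]"
proof (rule tens_eq.te_sym, rule R_right_cancel)
  define u where "u = (\<Sum>(a, b)\<leftarrow>R. scale (eps a) b)"
  have "t2 (tensor_mult [(1, 1)] R) = t2 [(\<Sum>(x1, x2)\<leftarrow>Delta r1. scale (eps x1) x2, r2). (r1, r2) \<leftarrow> R]"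
    by (simp add: counit_left)
  also have "\<dots> \<approx> t2 [(scale (eps r1) s1, r2 * s2). (r1, r2) \<leftarrow> R, (s1, s2) \<leftarrow> R]"
    by (rule sq1_contract[OF bilinear_map_eps_left])
  also have "\<dots> \<approx> t2 [(s1, scale (eps r1) r2 * s2). (r1, r2) \<leftarrow> R, (s1, s2) \<leftarrow> R]"
    by (intro tens_eq_t2_concat_map)
      (auto intro!: tens_eq_t2_map simp: tens_eq_scale_t2 scale_mult_left[symmetric])
  also have "\<dots> \<approx> t2 [(s1, scale (eps r1) r2 * s2). (s1, s2) \<leftarrow> R, (r1, r2) \<leftarrow> R]"
    unfolding split_def by (rule tens_eq_t2_swap)
  also have "\<dots> \<approx> t2 [(s1, u * s2). (s1, s2) \<leftarrow> R]"
    unfolding t2_concat t2_map[of _ R] map_map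
    by (intro tens_eq_concat_map)
      (auto simp: u_def split_def sum_list_mult_const[symmetric] intro: tens_eq_sum_list_right)
  finally show "t2 (tensor_mult [(1, 1)] R) \<approx> t2 (tensor_mult [(1, u)] R)"
    by (simp add: tensor_mult_def split_def)
qed

lemma R_counit_right: "t2 [(\<Sum>(a, b)\<leftarrow>R. scale (eps b) a, 1)] \<approx> t2 [(1, 1)]"
proof (rule tens_eq.te_sym, rule R_right_cancel)
  define v where "v = (\<Sum>(a, b)\<leftarrow>R. scale (eps b) a)"
  have "t2 (tensor_mult [(1, 1)] R) = t2 [(r1, \<Sum>(y1, y2)\<leftarrow>Delta r2. scale (eps y2) y1). (r1, r2) \<leftarrow> R]"
    by (simp add: counit_right)
  also have "\<dots> \<approx> t2 [(r1 * s1, scale (eps r2) s2). (r1, r2) \<leftarrow> R, (s1, s2) \<leftarrow> R]"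
    by (rule sq2_contract[OF bilinear_map_eps_right])
  also have "\<dots> \<approx> t2 [(scale (eps r2) r1 * s1, s2). (r1, r2) \<leftarrow> R, (s1, s2) \<leftarrow> R]"
    by (intro tens_eq_t2_concat_map)
      (auto intro!: tens_eq_t2_map simp: tens_eq.te_sym[OF tens_eq_scale_t2] scale_mult_left[symmetric])
  also have "\<dots> \<approx> t2 [(scale (eps r2) r1 * s1, s2). (s1, s2) \<leftarrow> R, (r1, r2) \<leftarrow> R]"
    unfolding split_def by (rule tens_eq_t2_swap)
  also have "\<dots> \<approx> t2 [(v * s1, s2). (s1, s2) \<leftarrow> R]"
    unfolding t2_concat t2_map[of _ R] map_map
    by (intro tens_eq_concat_map)
      (auto simp: v_def split_def sum_list_mult_const[symmetric] intro: tens_eq_sum_list_left)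
  finally show "t2 (tensor_mult [(1, 1)] R) \<approx> t2 (tensor_mult [(v, 1)] R)"
    by (simp add: tensor_mult_def split_def)
qed

lemma antipode_R_left_inverse: "t2 (tensor_mult (map (\<lambda>(a, b). (S a, b)) R) R) \<approx> t2 [(1, 1)]"
proof -
  have "t2 (tensor_mult (map (\<lambda>(a, b). (S a, b)) R) R) = t2 [(S r1 * s1, r2 * s2). (r1, r2) \<leftarrow> R, (s1, s2) \<leftarrow> R]"
    by (simp add: tensor_mult_def split_def comp_def)
  also have "\<dots> \<approx> t2 [(\<Sum>(x1, x2)\<leftarrow>Delta r1. S x1 * x2, r2). (r1, r2) \<leftarrow> R]"
    by (rule tens_eq.te_sym[OF sq1_contract[OF bilinear_map_S_mult]])
  also have "\<dots> = t2 [(scale (eps r1) 1, r2). (r1, r2) \<leftarrow> R]"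
    by (simp add: antipode_left)
  also have "\<dots> \<approx> t2 [(1, scale (eps r1) r2). (r1, r2) \<leftarrow> R]"
    by (rule tens_eq_t2_map) (auto simp: tens_eq_scale_t2)
  also have "\<dots> \<approx> t2 [(1, \<Sum>(a, b)\<leftarrow>R. scale (eps a) b)]"
    unfolding split_def by (rule tens_eq_sum_list_right)
  also have "\<dots> \<approx> t2 [(1, 1)]"
    by (rule R_counit_left)
  finally show ?thesis .
qed

lemma antipode_R_right_inverse: "t2 (tensor_mult R (map (\<lambda>(a, b). (S a, b)) R)) \<approx> t2 [(1, 1)]"
  by (rule R_right_inverse[OF antipode_R_left_inverse])

lemma Sinv_R_left_inverse: "t2 (tensor_mult (map (\<lambda>(a, b). (a, Sinv b)) R) R) \<approx> t2 [(1, 1)]"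
proof -
  have "bilinear_map (\<lambda>a b. Sinv b * a)"
    by (simp add: bilinear_map_def k_linear_intros k_linear_mult_right[OF k_linear_Sinv])
  have "t2 (tensor_mult (map (\<lambda>(a, b). (a, Sinv b)) R) R) = t2 [(r1 * s1, Sinv r2 * s2). (r1, r2) \<leftarrow> R, (s1, s2) \<leftarrow> R]"
    by (simp add: tensor_mult_def split_def comp_def)
  also have "\<dots> \<approx> t2 [(r1, \<Sum>(y1, y2)\<leftarrow>Delta r2. Sinv y2 * y1). (r1, r2) \<leftarrow> R]"
    by (rule tens_eq.te_sym[OF sq2_contract[OF \<open>bilinear_map (\<lambda>a b. Sinv b * a)\<close>]])
  also have "\<dots> = t2 [(r1, scale (eps r2) 1). (r1, r2) \<leftarrow> R]"
    by (simp add: sum_Delta_antipode_left_Sinv)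
  also have "\<dots> \<approx> t2 [(scale (eps r2) r1, 1). (r1, r2) \<leftarrow> R]"
    by (rule tens_eq_t2_map) (auto intro: tens_eq.te_sym[OF tens_eq_scale_t2])
  also have "\<dots> \<approx> t2 [(\<Sum>(a, b)\<leftarrow>R. scale (eps b) a, 1)]"
    unfolding split_def by (rule tens_eq_sum_list_left)
  also have "\<dots> \<approx> t2 [(1, 1)]"
    by (rule R_counit_right)
  finally show ?thesis .
qed

lemma R_S_squared_unit: "t2 [(b2 * s2, S (S s1) * S b1). (b1, b2) \<leftarrow> R, (s1, s2) \<leftarrow> R] \<approx> t2 [(1, 1)]"
  using tens_eq_map_tensor_swap[OF k_linear_S linear_ident antipode_R_right_inverse]
  by (simp add: tensor_mult_def map_concat comp_def split_def S_mult S_one)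

lemma R_S_unit: "t2 [(s1 * u1, u2 * S s2). (u1, u2) \<leftarrow> R, (s1, s2) \<leftarrow> R] \<approx> t2 [(1, 1)]"
proof -
  have "t2 [(s1 * u1, u2 * S s2). (u1, u2) \<leftarrow> R, (s1, s2) \<leftarrow> R]
      \<approx> t2 [(s1 * u1, u2 * S s2). (s1, s2) \<leftarrow> R, (u1, u2) \<leftarrow> R]"
    unfolding split_def by (rule tens_eq_t2_swap)
  also have "\<dots> \<approx> t2 [(1, 1)]"
    using tens_eq_map_tensor[OF linear_ident k_linear_S R_right_inverse[OF Sinv_R_left_inverse]]
    by (simp add: tensor_mult_def map_concat comp_def split_def S_mult S_one)
  finally show ?thesis .
qed

lemma tensor_bilinear_eq_on_nu:
  assumes "t2 N \<approx> t2 (nu Delta S R x)"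
    and "tensor_bilinear W1" and "tensor_bilinear W2"
    and "\<And>p z. z \<in> centre \<Longrightarrow> W1 p z = W2 p z"
  shows "concat (map (\<lambda>(p, q). W1 p q) N) \<approx> concat (map (\<lambda>(p, q). W2 p q) N)"
proof -
  obtain Z where Z: "\<forall>(a, z) \<in> set Z. z \<in> centre" and nu_Z: "t2 (nu Delta S R x) \<approx> t2 Z"
    using sq5 by blast
  from assms(1) nu_Z have NZ: "t2 N \<approx> t2 Z"
    by (rule tens_eq.te_trans)
  have "concat (map (\<lambda>(p, q). W1 p q) N) \<approx> concat (map (\<lambda>(p, q). W1 p q) Z)"
    by (rule tensor_bilinear_tens_eq[OF assms(2) NZ])
  also have "\<dots> = concat (map (\<lambda>(p, q). W2 p q) Z)"
    using Z assms(4) by (fastforce intro!: arg_cong[where f = concat] map_cong)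
  also have "\<dots> \<approx> concat (map (\<lambda>(p, q). W2 p q) N)"
    by (rule tens_eq.te_sym[OF tensor_bilinear_tens_eq[OF assms(3) NZ]])
  finally show ?thesis .
qed

(* \<Sum> p x \<otimes> y q z = \<nu>(x) (\<Sum> x \<otimes> y z), because each q is central *)
lemma nu_absorb_unit:
  assumes N: "t2 N \<approx> t2 (nu Delta S R x)"
    and E: "t2 [(f b c, g b c * k b c). b \<leftarrow> B, c \<leftarrow> C] \<approx> t2 [(1, 1)]"
  shows "concat (map (\<lambda>b. concat (map (\<lambda>(p, q). concat (map (\<lambda>c. [[p * f b c, g b c * q * k b c]]) C)) N)) B)
           \<approx> t2 N"
proof -
  have "concat (map (\<lambda>b. concat (map (\<lambda>(p, q). concat (map (\<lambda>c. [[p * f b c, g b c * q * k b c]]) C)) N)) B)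
      \<approx> concat (map (\<lambda>b. concat (map (\<lambda>(p, q). concat (map (\<lambda>c. [[p * f b c, q * (g b c * k b c)]]) C)) N)) B)"
  proof (rule tens_eq_concat_map, rule tensor_bilinear_eq_on_nu[OF N])
    show "tensor_bilinear (\<lambda>p q. concat (map (\<lambda>c. [[p * f b c, g b c * q * k b c]]) C))"
      and "tensor_bilinear (\<lambda>p q. concat (map (\<lambda>c. [[p * f b c, q * (g b c * k b c)]]) C))" for b
      by (intro tensor_bilinear_concat_map tensor_bilinear_pure k_linear_intros)+
    show "concat (map (\<lambda>c. [[p * f b c, g b c * z * k b c]]) C)
        = concat (map (\<lambda>c. [[p * f b c, z * (g b c * k b c)]]) C)" if "z \<in> centre" for b p z
      using that by (simp add: centre_def mult.assoc)
  qed
  also have "\<dots> \<approx> concat (map (\<lambda>(p, q). concat (map (\<lambda>b. concat (map (\<lambda>c. [[p * f b c, q * (g b c * k b c)]]) C)) B)) N)"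
    unfolding split_def by (rule tens_eq_concat_map_swap)
  also have "\<dots> \<approx> concat (map (\<lambda>(p, q). [[p, q]]) N)"
  proof (rule tens_eq_concat_map, clarify)
    fix p q
    have "k_linear (\<lambda>u. p * u)" and "k_linear (\<lambda>v. q * v)"
      by (intro k_linear_intros)+
    from tens_eq_map_tensor[OF this E]
    show "concat (map (\<lambda>b. concat (map (\<lambda>c. [[p * f b c, q * (g b c * k b c)]]) C)) B) \<approx> [[p, q]]"
      by (simp add: t2_def map_concat comp_def)
  qed
  also have "\<dots> = t2 N"
    by (simp add: t2_def split_def)
  finally show ?thesis .
qed

lemma nu_eq_S_squared_form:
  "t2 (nu Delta S R x) \<approx> t2 [(r2 * h2 * s2, S (S s1) * S h1 * S r1 * h3).
     (r1, r2) \<leftarrow> R, (s1, s2) \<leftarrow> R, (h1, h2, h3) \<leftarrow> Delta2 Delta x]"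
proof -
  define D where "D = Delta2 Delta x"
  define N where "N = [(r2 * h2 * a2, S h1 * S r1 * h3 * a1). (a1, a2) \<leftarrow> R, (r1, r2) \<leftarrow> R, (h1, h2, h3) \<leftarrow> D]"
  define W where "W p q = concat (map (\<lambda>((r1, r2), (h1, h2, h3), (s1, s2)).
      [[r2 * h2 * q * s2, S (S s1) * S h1 * S r1 * h3 * p]]) [(r, h, s). r \<leftarrow> R, h \<leftarrow> D, s \<leftarrow> R])" for p q
  have N_nu: "t2 N \<approx> t2 (nu Delta S R x)"
    unfolding N_def nu_def D_def split_def by (rule tens_eq_t2_swap_concat)
  have "tensor_bilinear W"
    unfolding W_def split_def by (intro tensor_bilinear_concat_map tensor_bilinear_pure_swap k_linear_intros)
  have "t2 [(a1 * S b1, a2 * b2). (b1, b2) \<leftarrow> R, (a1, a2) \<leftarrow> R]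
      \<approx> t2 [(a1 * S b1, a2 * b2). (a1, a2) \<leftarrow> R, (b1, b2) \<leftarrow> R]"
    unfolding split_def by (rule tens_eq_t2_swap)
  also have "\<dots> \<approx> t2 [(1, 1)]"
    using antipode_R_right_inverse by (simp add: tensor_mult_def split_def comp_def)
  finally have unit: "t2 [(a1 * S b1, a2 * b2). (b1, b2) \<leftarrow> R, (a1, a2) \<leftarrow> R] \<approx> t2 [(1, 1)]" .
  have "t2 [(r2 * h2 * s2, S (S s1) * S h1 * S r1 * h3). (r1, r2) \<leftarrow> R, (s1, s2) \<leftarrow> R, (h1, h2, h3) \<leftarrow> D]
      \<approx> t2 [(r2 * h2 * s2, S (S s1) * S h1 * S r1 * h3). (r1, r2) \<leftarrow> R, (h1, h2, h3) \<leftarrow> D, (s1, s2) \<leftarrow> R]"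
    by (intro tens_eq_t2_concat_map) (auto simp: split_def intro: tens_eq_t2_swap)
  also have "\<dots> = W 1 1"
    by (simp add: W_def t2_def map_concat split_def comp_def concat_concat)
  also have "\<dots> \<approx> concat (map (\<lambda>(p, q). W p q) [(a1 * S b1, a2 * b2). (b1, b2) \<leftarrow> R, (a1, a2) \<leftarrow> R])"
    by (rule tensor_bilinear_unit[OF \<open>tensor_bilinear W\<close> unit])
  also have "\<dots> = concat (map (\<lambda>b. concat (map (\<lambda>(p, q). concat (map (\<lambda>c.
      [[p * (snd b * snd c), S (S (fst c)) * q * S (fst b)]]) R)) N)) R)"
    by (simp add: W_def N_def map_concat split_def comp_def mult.assoc concat_concat)
  also have "\<dots> \<approx> t2 N"
    by (rule nu_absorb_unit[OF N_nu]) (use R_S_squared_unit in \<open>simp add: split_def\<close>)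
  also note N_nu
  finally show ?thesis
    unfolding D_def by (rule tens_eq.te_sym)
qed

lemma nu_eq_S_form:
  "t2 (nu Delta S R x) \<approx> t2 [(r1 * h2 * S s1, S h1 * r2 * h3 * s2).
     (r1, r2) \<leftarrow> R, (s1, s2) \<leftarrow> R, (h1, h2, h3) \<leftarrow> Delta2 Delta x]"
proof -
  define D where "D = Delta2 Delta x"
  define N where "N = [(r1 * h2 * s1, S s2 * S h1 * r2 * h3). (s1, s2) \<leftarrow> R, (r1, r2) \<leftarrow> R, (h1, h2, h3) \<leftarrow> D]"
  define W where "W p q = concat (map (\<lambda>((r1, r2), (h1, h2, h3), (t1, t2)).
      [[r1 * h2 * p * S t1, q * S h1 * r2 * h3 * t2]]) [(r, h, t). r \<leftarrow> R, h \<leftarrow> D, t \<leftarrow> R])" for p q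
  have "t2 N \<approx> t2 [(r1 * h2 * s1, S s2 * S h1 * r2 * h3). (r1, r2) \<leftarrow> R, (s1, s2) \<leftarrow> R, (h1, h2, h3) \<leftarrow> D]"
    unfolding N_def split_def by (rule tens_eq_t2_swap_concat)
  also have "\<dots> \<approx> t2 (nu Delta S R x)"
    unfolding D_def by (rule tens_eq.te_sym[OF sq6])
  finally have N_nu: "t2 N \<approx> t2 (nu Delta S R x)" .
  have "tensor_bilinear W"
    unfolding W_def split_def by (intro tensor_bilinear_concat_map tensor_bilinear_pure k_linear_intros)
  have "t2 [(r1 * h2 * S s1, S h1 * r2 * h3 * s2). (r1, r2) \<leftarrow> R, (s1, s2) \<leftarrow> R, (h1, h2, h3) \<leftarrow> D]
      \<approx> t2 [(r1 * h2 * S s1, S h1 * r2 * h3 * s2). (r1, r2) \<leftarrow> R, (h1, h2, h3) \<leftarrow> D, (s1, s2) \<leftarrow> R]"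
    by (intro tens_eq_t2_concat_map) (auto simp: split_def intro: tens_eq_t2_swap)
  also have "\<dots> = W 1 1"
    by (simp add: W_def t2_def map_concat split_def comp_def concat_concat)
  also have "\<dots> \<approx> concat (map (\<lambda>(p, q). W p q) [(s1 * u1, u2 * S s2). (u1, u2) \<leftarrow> R, (s1, s2) \<leftarrow> R])"
    by (rule tensor_bilinear_unit[OF \<open>tensor_bilinear W\<close> R_S_unit])
  also have "\<dots> = concat (map (\<lambda>u. concat (map (\<lambda>(p, q). concat (map (\<lambda>t.
      [[p * (fst u * S (fst t)), snd u * q * snd t]]) R)) N)) R)"
    by (simp add: W_def N_def map_concat split_def comp_def mult.assoc concat_concat)
  also have "\<dots> \<approx> t2 N"
    by (rule nu_absorb_unit[OF N_nu]) (use antipode_R_right_inverse in \<open>simp add: tensor_mult_def split_def comp_def\<close>)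
  also note N_nu
  finally show ?thesis
    unfolding D_def by (rule tens_eq.te_sym)
qed

end

theorem proposition1p9:
  fixes scale :: "'k::field \<Rightarrow> 'h::ring_1 \<Rightarrow> 'h"
    and Delta :: "'h \<Rightarrow> ('h \<times> 'h) list"
    and eps :: "'h \<Rightarrow> 'k"
    and S :: "'h \<Rightarrow> 'h"
    and R :: "('h \<times> 'h) list"
  assumes "semiquasitriangular scale Delta eps S R"
  shows "tens_eq scale (t2 (nu Delta S R x))
           (t2 [(r2 * h2 * s2, S (S s1) * S h1 * S r1 * h3).
                 (r1, r2) \<leftarrow> R, (s1, s2) \<leftarrow> R, (h1, h2, h3) \<leftarrow> Delta2 Delta x])
       \<and> tens_eq scale (t2 (nu Delta S R x))
           (t2 [(r1 * h2 * S s1, S h1 * r2 * h3 * s2).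
                 (r1, r2) \<leftarrow> R, (s1, s2) \<leftarrow> R, (h1, h2, h3) \<leftarrow> Delta2 Delta x])"
proof -
  interpret semiquasitriangular scale Delta eps S R
    by (rule assms)
  show ?thesis
    using nu_eq_S_squared_form nu_eq_S_form by blast
qed

end
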